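(* Let $(X,d,W)$ be a $W$-hyperbolic space. The following are equivalent: (1) there exists $\eta:(0,\infty)\times(0,2]\to(0,1]$ such that for all $r>0$, $\varepsilon\in(0,2]$ and $a,x,y\in X$: if $d(x,a)\le r$, $d(y,a)\le r$ and $d(x,y)\ge\varepsilon r$, then $d\big(\tfrac12x\oplus\tfrac12y,a\big)\le(1-\eta(r,\varepsilon))r$; (2) there exists $\eta:\mathbb Q^+_*\times\mathbb N\to\mathbb N$ such that for all $r\in\mathbb Q^+_*$, $k\in\mathbb N$ and $a,x,y\in X$: if $d(x,a)<r$, $d(y,a)<r$ and $d\big(\tfrac12x\oplus\tfrac12y,a\big)>\big(1-2^{-\eta(r,k)}\big)r$, then $d(x,y)\le 2^{-k}r$.
   Context: A $W$-hyperbolic space is $(X,d,W)$ with $(X,d)$ a metric space and $W:X\times X\times[0,1]\to X$ such that for all $x,y,z,w\in X$, $\lambda,\lambda_1,\lambda_2\in[0,1]$: (W1) $d(z,W(x,y,\lambda))\le(1-\lambda)d(z,x)+\lambda d(z,y)$; (W2) $d(W(x,y,\lambda_1),W(x,y,\lambda_2))=|\lambda_1-\lambda_2|d(x,y)$; (W3) $W(x,y,\lambda)=W(y,x,1-\lambda)$; (W4) $d(W(x,z,\lambda),W(y,w,\lambda))\le(1-\lambda)d(x,y)+\lambda d(z,w)$. Notation: $(1-\lambda)x\oplus\lambda y:=W(x,y,\lambda)$. $\mathbb Q^+_*$ denotes the set of positive rational numbers. *)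

theory Defs
  imports "HOL-Analysis.Analysis"
begin

definition W_hyperbolic :: "('a::metric_space \<Rightarrow> 'a \<Rightarrow> real \<Rightarrow> 'a) \<Rightarrow> bool" where
  "W_hyperbolic W \<longleftrightarrow>
     (\<forall>x y z w l l1 l2.
        (0 \<le> l \<and> l \<le> 1 \<longrightarrow> dist z (W x y l) \<le> (1 - l) * dist z x + l * dist z y) \<and>
        (0 \<le> l1 \<and> l1 \<le> 1 \<and> 0 \<le> l2 \<and> l2 \<le> 1 \<longrightarrow>
            dist (W x y l1) (W x y l2) = \<bar>l1 - l2\<bar> * dist x y) \<and>
        (0 \<le> l \<and> l \<le> 1 \<longrightarrow> W x y l = W y x (1 - l)) \<and>
        (0 \<le> l \<and> l \<le> 1 \<longrightarrow> dist (W x z l) (W y w l) \<le> (1 - l) * dist x y + l * dist z w))"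

end

theory Submission
  imports Defs
begin

text \<open>Going from (1) to (2), choose n with 2^-n below the modulus of (1) at \<open>\<epsilon> = 2^-k\<close> and
argue by contraposition. Going from (2) to (1), the difficulty is that (2) only speaks about
points strictly inside a ball of rational radius. Given r, pick a rational q slightly below r
and pull x and y towards a along the geodesics \<open>W a x\<close>, \<open>W a y\<close> until they lie in the open ball
of radius q. By (W2) they move only a little, so they remain far apart and (2) applies; by (W4)
the midpoint moves by at most the same amount, and the gain \<open>2^-\<eta> q\<close> survives.\<close>

definition uc_modulus :: "('a::metric_space \<Rightarrow> 'a \<Rightarrow> real \<Rightarrow> 'a) \<Rightarrow> (real \<Rightarrow> real \<Rightarrow> real) \<Rightarrow> bool" where
  "uc_modulus W \<eta> \<longleftrightarrow>
     (\<forall>r \<epsilon>. r > 0 \<and> 0 < \<epsilon> \<and> \<epsilon> \<le> 2 \<longrightarrow> 0 < \<eta> r \<epsilon> \<and> \<eta> r \<epsilon> \<le> 1) \<and>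
     (\<forall>r \<epsilon> a x y. r > 0 \<and> 0 < \<epsilon> \<and> \<epsilon> \<le> 2 \<and>
        dist x a \<le> r \<and> dist y a \<le> r \<and> dist x y \<ge> \<epsilon> * r \<longrightarrow>
        dist (W x y (1/2)) a \<le> (1 - \<eta> r \<epsilon>) * r)"

definition rat_uc_modulus :: "('a::metric_space \<Rightarrow> 'a \<Rightarrow> real \<Rightarrow> 'a) \<Rightarrow> (rat \<Rightarrow> nat \<Rightarrow> nat) \<Rightarrow> bool" where
  "rat_uc_modulus W \<eta> \<longleftrightarrow>
     (\<forall>r k a x y. r > 0 \<and>
        dist x a < real_of_rat r \<and> dist y a < real_of_rat r \<and>
        dist (W x y (1/2)) a > (1 - (1/2) ^ \<eta> r k) * real_of_rat r \<longrightarrow>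
        dist x y \<le> (1/2) ^ k * real_of_rat r)"

lemma W_hyperbolic_dist_W_le:
  "W_hyperbolic W \<Longrightarrow> 0 \<le> l \<Longrightarrow> l \<le> 1 \<Longrightarrow> dist z (W x y l) \<le> (1 - l) * dist z x + l * dist z y"
  unfolding W_hyperbolic_def by blast

lemma W_hyperbolic_dist_W_W_eq:
  "W_hyperbolic W \<Longrightarrow> 0 \<le> l1 \<Longrightarrow> l1 \<le> 1 \<Longrightarrow> 0 \<le> l2 \<Longrightarrow> l2 \<le> 1 \<Longrightarrow>
   dist (W x y l1) (W x y l2) = \<bar>l1 - l2\<bar> * dist x y"
  unfolding W_hyperbolic_def by blast

lemma W_hyperbolic_dist_W_W_le:
  "W_hyperbolic W \<Longrightarrow> 0 \<le> l \<Longrightarrow> l \<le> 1 \<Longrightarrow>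
   dist (W x z l) (W y w l) \<le> (1 - l) * dist x y + l * dist z w"
  unfolding W_hyperbolic_def by blast

lemma W_hyperbolic_W_0: "W_hyperbolic W \<Longrightarrow> W x y 0 = x"
  using W_hyperbolic_dist_W_le[of W 0 x x y] by simp

lemma W_hyperbolic_W_1: "W_hyperbolic W \<Longrightarrow> W x y 1 = y"
  using W_hyperbolic_dist_W_le[of W 1 y x y] by simp

lemma W_hyperbolic_dist_W_left:
  "W_hyperbolic W \<Longrightarrow> 0 \<le> l \<Longrightarrow> l \<le> 1 \<Longrightarrow> dist (W x y l) x = l * dist x y"
  using W_hyperbolic_dist_W_W_eq[of W l 0 x y] W_hyperbolic_W_0[of W x y] by simp

lemma W_hyperbolic_dist_W_right:
  "W_hyperbolic W \<Longrightarrow> 0 \<le> l \<Longrightarrow> l \<le> 1 \<Longrightarrow> dist (W x y l) y = (1 - l) * dist x y"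
  using W_hyperbolic_dist_W_W_eq[of W l 1 x y] W_hyperbolic_W_1[of W x y] by simp

lemma W_hyperbolic_dist_midpoints_le:
  assumes "W_hyperbolic W"
  shows "dist (W x y (1/2)) (W x' y' (1/2)) \<le> (dist x x' + dist y y') / 2"
  using W_hyperbolic_dist_W_W_le[OF assms, of "1/2" x y x' y'] by simp

lemma W_hyperbolic_pull_towards:
  assumes "W_hyperbolic W" "dist x a \<le> r" "0 \<le> t" "t \<le> r"
  shows "dist (W a x (t / r)) a \<le> t" and "dist x (W a x (t / r)) \<le> r - t"
proof -
  have l: "0 \<le> t / r" "t / r \<le> 1"
    using assms(3,4) by (auto simp: divide_le_eq_1)
  have d: "dist a x \<le> r" using assms(2) by (simp add: dist_commute)
  have "t / r * dist a x \<le> t / r * r"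
    using d l(1) by (rule mult_left_mono)
  also have "\<dots> \<le> t"
    using assms(3,4) by (cases "r = 0") simp_all
  finally show "dist (W a x (t / r)) a \<le> t"
    using W_hyperbolic_dist_W_left[OF assms(1) l] by simp
  have "(1 - t / r) * dist a x \<le> (1 - t / r) * r"
    using d l(2) by (simp add: mult_left_mono)
  also have "\<dots> = r - t"
    using assms(3,4) by (cases "r = 0") (simp_all add: field_simps)
  finally show "dist x (W a x (t / r)) \<le> r - t"
    using W_hyperbolic_dist_W_right[OF assms(1) l] by (simp add: dist_commute)
qed

lemma rat_uc_modulus_of_uc_modulus:
  assumes "uc_modulus W \<eta>"
  shows "rat_uc_modulus W (\<lambda>r k. LEAST n. (1/2::real) ^ n < \<eta> (real_of_rat r) ((1/2) ^ k))"
  unfolding rat_uc_modulus_def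
proof (intro allI impI, elim conjE)
  fix r :: rat and k a x y
  define n where "n = (LEAST n. (1/2::real) ^ n < \<eta> (real_of_rat r) ((1/2) ^ k))"
  assume "r > 0" and x: "dist x a < real_of_rat r" and y: "dist y a < real_of_rat r"
    and mid: "dist (W x y (1/2)) a > (1 - (1/2) ^ n) * real_of_rat r"
  have r: "real_of_rat r > 0" using \<open>r > 0\<close> by simp
  have eps: "0 < (1/2::real) ^ k" "(1/2::real) ^ k \<le> 2"
    using power_le_one[of "1/2::real" k] by simp_all
  have "0 < \<eta> (real_of_rat r) ((1/2) ^ k)"
    using assms r eps unfolding uc_modulus_def by blast
  then have "(1/2::real) ^ n < \<eta> (real_of_rat r) ((1/2) ^ k)"
    unfolding n_def by (rule LeastI_ex[OF real_arch_pow_inv]) simp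
  then have gain: "(1 - \<eta> (real_of_rat r) ((1/2) ^ k)) * real_of_rat r \<le> (1 - (1/2) ^ n) * real_of_rat r"
    using r by (intro mult_right_mono) simp_all
  show "dist x y \<le> (1/2) ^ k * real_of_rat r"
  proof (rule ccontr)
    assume "\<not> ?thesis"
    then have "dist (W x y (1/2)) a \<le> (1 - \<eta> (real_of_rat r) ((1/2) ^ k)) * real_of_rat r"
      using assms r eps x y unfolding uc_modulus_def by simp
    then show False using gain mid by simp
  qed
qed

lemma rat_uc_modulus_midpoint_le:
  assumes W: "W_hyperbolic W" and \<eta>: "rat_uc_modulus W \<eta>"
    and \<epsilon>: "0 < \<epsilon>" "\<epsilon> \<le> 2"
    and q: "r * (1 - \<epsilon>/8) < real_of_rat q" "real_of_rat q < r"
    and k: "(1/2) ^ k < \<epsilon> / 2"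
    and x: "dist x a \<le> r" and y: "dist y a \<le> r" and xy: "\<epsilon> * r \<le> dist x y"
  shows "dist (W x y (1/2)) a \<le> r - (1/2) ^ \<eta> q k * real_of_rat q * (1 - \<epsilon>/8)"
proof -
  define \<rho> where "\<rho> = real_of_rat q"
  define p where "p = (1/2::real) ^ \<eta> q k"
  define c where "c = \<epsilon> / 8"
  \<comment> \<open>The radius after pulling: below \<open>\<rho>\<close>, yet the loss \<open>r - t\<close> stays under both \<open>\<epsilon> r / 4\<close> and the gain \<open>p \<rho>\<close>.\<close>
  define t where "t = \<rho> - p * c * \<rho>"
  have c: "0 < c" "c \<le> 1/4" using \<epsilon> unfolding c_def by simp_all
  have \<rho>: "r * (1 - c) < \<rho>" "\<rho> < r" using q unfolding \<rho>_def c_def by simp_all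
  have "0 < r * c" using \<rho> by (simp add: algebra_simps)
  then have r: "0 < r" using c by (simp add: zero_less_mult_iff)
  have "0 < r * (1 - c)" using r c by simp
  then have "0 < \<rho>" using \<rho> by linarith
  have p: "0 < p" "p \<le> 1" unfolding p_def by (simp_all add: power_le_one)
  have pc\<rho>: "0 < p * c * \<rho>" "p * c * \<rho> \<le> c * \<rho>"
    using p c \<open>0 < \<rho>\<close> by (simp_all add: mult_right_le_one_le)
  have "c * \<rho> \<le> \<rho> / 4" using c \<open>0 < \<rho>\<close> by simp
  then have t: "0 \<le> t" "t < \<rho>" "t \<le> r" using pc\<rho> \<rho> unfolding t_def by linarith+
  have "r - t \<le> c * r + c * \<rho>" using \<rho> pc\<rho> unfolding t_def by (simp add: algebra_simps)
  also have "\<dots> \<le> \<epsilon> / 4 * r"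
    using mult_left_mono[of \<rho> r c] c \<rho> unfolding c_def by linarith
  finally have shift: "r - t \<le> \<epsilon> / 4 * r" .
  define x' where "x' = W a x (t / r)"
  define y' where "y' = W a y (t / r)"
  note x' = W_hyperbolic_pull_towards[OF W x t(1,3), folded x'_def]
  note y' = W_hyperbolic_pull_towards[OF W y t(1,3), folded y'_def]
  have "dist x y \<le> dist x x' + dist x' y' + dist y y'"
    using dist_triangle[of x y x'] dist_triangle[of x' y y'] by (simp add: dist_commute)
  then have "\<epsilon> / 2 * r \<le> dist x' y'" using xy x'(2) y'(2) shift by linarith
  moreover have "(1/2) ^ k * \<rho> < \<epsilon> / 2 * r"
    using k \<epsilon> \<rho> \<open>0 < \<rho>\<close> by (intro mult_strict_mono) simp_all
  ultimately have "\<not> dist x' y' \<le> (1/2) ^ k * \<rho>" by linarith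
  moreover have "0 < q" "dist x' a < \<rho>" "dist y' a < \<rho>"
    using \<open>0 < \<rho>\<close> x'(1) y'(1) t(2) unfolding \<rho>_def by simp_all
  ultimately have mid': "dist (W x' y' (1/2)) a \<le> (1 - p) * \<rho>"
    using \<eta> unfolding rat_uc_modulus_def p_def \<rho>_def by (meson not_le)
  have "dist (W x y (1/2)) a \<le> dist (W x y (1/2)) (W x' y' (1/2)) + dist (W x' y' (1/2)) a"
    by (rule dist_triangle)
  also have "\<dots> \<le> (r - t) + (1 - p) * \<rho>"
    using W_hyperbolic_dist_midpoints_le[OF W, of x y x' y'] x'(2) y'(2) mid' by simp
  also have "\<dots> = r - p * \<rho> * (1 - c)" unfolding t_def by (simp add: algebra_simps)
  finally show ?thesis unfolding p_def \<rho>_def c_def .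
qed

lemma uc_modulus_of_rat_uc_modulus:
  assumes W: "W_hyperbolic W" and \<eta>: "rat_uc_modulus W \<eta>"
  shows "\<exists>\<eta>'. uc_modulus W \<eta>'"
proof -
  have "\<forall>r \<epsilon>. \<exists>q. 0 < r \<and> 0 < \<epsilon> \<longrightarrow> r * (1 - \<epsilon>/8) < real_of_rat q \<and> real_of_rat q < r"
    using of_rat_dense by (simp add: mult_less_cancel_left1)
  then obtain Q where Q: "\<And>r \<epsilon>. 0 < r \<Longrightarrow> 0 < \<epsilon> \<Longrightarrow>
      r * (1 - \<epsilon>/8) < real_of_rat (Q r \<epsilon>) \<and> real_of_rat (Q r \<epsilon>) < r"
    by metis
  have "\<exists>k. (1/2::real) ^ k < \<epsilon> / 2" if "0 < \<epsilon>" for \<epsilon> :: real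
    using real_arch_pow_inv[of "\<epsilon> / 2" "1/2::real"] that by simp
  then obtain K where K: "\<And>\<epsilon>. 0 < \<epsilon> \<Longrightarrow> (1/2::real) ^ K \<epsilon> < \<epsilon> / 2"
    by metis
  define \<eta>' where "\<eta>' r \<epsilon> = (1/2) ^ \<eta> (Q r \<epsilon>) (K \<epsilon>) * real_of_rat (Q r \<epsilon>) * (1 - \<epsilon>/8) / r" for r \<epsilon>
  have "0 < \<eta>' r \<epsilon> \<and> \<eta>' r \<epsilon> \<le> 1" if "0 < r" "0 < \<epsilon>" "\<epsilon> \<le> 2" for r \<epsilon>
  proof -
    define p where "p = (1/2::real) ^ \<eta> (Q r \<epsilon>) (K \<epsilon>)"
    define \<rho> where "\<rho> = real_of_rat (Q r \<epsilon>)"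
    have "0 < r * (1 - \<epsilon>/8)" using that by simp
    then have \<rho>: "0 < \<rho>" "\<rho> < r" using Q[OF that(1,2)] unfolding \<rho>_def by linarith+
    have p: "0 < p" "p \<le> 1" unfolding p_def by (simp_all add: power_le_one)
    have "0 < p * \<rho> * (1 - \<epsilon>/8)" using p \<rho> that by simp
    moreover have "p * \<rho> * (1 - \<epsilon>/8) \<le> 1 * r * 1"
      using p \<rho> that by (intro mult_mono) simp_all
    ultimately show ?thesis
      using that unfolding \<eta>'_def p_def[symmetric] \<rho>_def[symmetric] by simp
  qed
  moreover have "dist (W x y (1/2)) a \<le> (1 - \<eta>' r \<epsilon>) * r"
    if "0 < r" "0 < \<epsilon>" "\<epsilon> \<le> 2" "dist x a \<le> r" "dist y a \<le> r" "\<epsilon> * r \<le> dist x y" for r \<epsilon> a x y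
  proof -
    have "(1 - \<eta>' r \<epsilon>) * r
        = r - (1/2) ^ \<eta> (Q r \<epsilon>) (K \<epsilon>) * real_of_rat (Q r \<epsilon>) * (1 - \<epsilon>/8)"
      using that(1) unfolding \<eta>'_def by (simp add: field_simps)
    then show ?thesis
      using rat_uc_modulus_midpoint_le[OF W \<eta> that(2,3) _ _ K[OF that(2)] that(4-6)] Q[OF that(1,2)]
      by simp
  qed
  ultimately have "uc_modulus W \<eta>'" unfolding uc_modulus_def by blast
  then show ?thesis by blast
qed

theorem proposition3p8:
  fixes W :: "'a::metric_space \<Rightarrow> 'a \<Rightarrow> real \<Rightarrow> 'a"
  assumes "W_hyperbolic W"
  shows "(\<exists>\<eta> :: real \<Rightarrow> real \<Rightarrow> real.
            (\<forall>r \<epsilon>. r > 0 \<and> 0 < \<epsilon> \<and> \<epsilon> \<le> 2 \<longrightarrow> 0 < \<eta> r \<epsilon> \<and> \<eta> r \<epsilon> \<le> 1) \<and>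
            (\<forall>r \<epsilon> a x y. r > 0 \<and> 0 < \<epsilon> \<and> \<epsilon> \<le> 2 \<and>
               dist x a \<le> r \<and> dist y a \<le> r \<and> dist x y \<ge> \<epsilon> * r \<longrightarrow>
               dist (W x y (1/2)) a \<le> (1 - \<eta> r \<epsilon>) * r))
     \<longleftrightarrow>
         (\<exists>\<eta> :: rat \<Rightarrow> nat \<Rightarrow> nat.
            \<forall>r k a x y. r > 0 \<and>
               dist x a < real_of_rat r \<and> dist y a < real_of_rat r \<and>
               dist (W x y (1/2)) a > (1 - (1/2) ^ \<eta> r k) * real_of_rat r \<longrightarrow>
               dist x y \<le> (1/2) ^ k * real_of_rat r)"
proof -
  have "(\<exists>\<eta>. uc_modulus W \<eta>) \<longleftrightarrow> (\<exists>\<eta>. rat_uc_modulus W \<eta>)"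
    using rat_uc_modulus_of_uc_modulus uc_modulus_of_rat_uc_modulus[OF assms] by blast
  then show ?thesis
    unfolding uc_modulus_def rat_uc_modulus_def .
qed

end
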